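(* Let $n\geq1$ and let $H$ be an irreducible subgroup of $SL(n,\mathbb{C})$. Then $|Z_n(H)|$ divides $n^2$. Moreover, $Z_n(H)$ is an irreducible subgroup of $PSL(n,\mathbb{C})$ if and only if $|Z_n(H)|=n^2$.
   Context: Let $\xi=e^{2\pi i/n}$; the center of $SL(n,\mathbb{C})$ is $\langle \xi I_n\rangle$, and $\pi_n:SL(n,\mathbb{C})\to PSL(n,\mathbb{C})$ is the quotient map. A subgroup $H\le SL(n,\mathbb{C})$ is irreducible if no nonzero proper subspace of $\mathbb{C}^n$ is $H$-invariant; a subgroup of $PSL(n,\mathbb{C})$ is irreducible if its preimage under $\pi_n$ is. $Z_n(H)$ denotes the centralizer of $\pi_n(H)$ in $PSL(n,\mathbb{C})$. *)

theory Defs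
  imports "HOL-Analysis.Analysis"
begin

text \<open>n x n complex matrices, with n = CARD('n) (arbitrary, >= 1 automatically).\<close>

definition SL :: "(complex^'n^'n) set" where
  "SL = {A. det A = 1}"

definition xi :: "'n::finite itself \<Rightarrow> complex" where
  "xi _ = cis (2 * pi / real CARD('n))"

definition center_SL :: "(complex^'n::finite^'n) set" where
  "center_SL = {mat (xi TYPE('n) ^ k) | k. k < CARD('n)}"

text \<open>Quotient map SL(n,C) -> PSL(n,C); elements of PSL are cosets of the center.\<close>
definition piPSL :: "complex^'n::finite^'n \<Rightarrow> (complex^'n^'n) set" where
  "piPSL A = (\<lambda>Z. Z ** A) ` center_SL"

definition PSL :: "(complex^'n::finite^'n) set set" where
  "PSL = piPSL ` SL"

definition csubspace :: "(complex^'n) set \<Rightarrow> bool" where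
  "csubspace V \<longleftrightarrow> 0 \<in> V \<and> (\<forall>x\<in>V. \<forall>y\<in>V. x + y \<in> V) \<and> (\<forall>c. \<forall>x\<in>V. c *s x \<in> V)"

definition irreducible_mats :: "(complex^'n^'n) set \<Rightarrow> bool" where
  "irreducible_mats H \<longleftrightarrow>
     \<not> (\<exists>V. csubspace V \<and> V \<noteq> {0} \<and> V \<noteq> UNIV \<and> (\<forall>A\<in>H. \<forall>v\<in>V. A *v v \<in> V))"

definition subgroup_SL :: "(complex^'n::finite^'n) set \<Rightarrow> bool" where
  "subgroup_SL H \<longleftrightarrow> H \<subseteq> SL \<and> mat 1 \<in> H \<and> (\<forall>A\<in>H. \<forall>B\<in>H. A ** B \<in> H)
     \<and> (\<forall>A\<in>H. matrix_inv A \<in> H)"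

definition irreducible_PSL :: "(complex^'n::finite^'n) set set \<Rightarrow> bool" where
  "irreducible_PSL K \<longleftrightarrow> irreducible_mats {A\<in>SL. piPSL A \<in> K}"

text \<open>Z_n(H): centralizer of pi(H) in PSL; the product in PSL is pi A * pi B = pi (A B).\<close>
definition Zn :: "(complex^'n::finite^'n) set \<Rightarrow> (complex^'n^'n) set set" where
  "Zn H = {piPSL A | A. A \<in> SL \<and> (\<forall>h\<in>H. piPSL (A ** h) = piPSL (h ** A))}"

end

theory Submission
  imports Defs "HOL-Computational_Algebra.Fundamental_Theorem_Algebra"
begin

text \<open>
  Let Z be the preimage of Z_n(H) in SL(n,C): the matrices A with A h = c h A for every h in H,
  c an n-th root of unity. If A in Z is not scalar, Schur's lemma yields an h with c ~= 1, and
  tr A = tr (h^-1 A h) = c tr A forces tr A = 0. So for representatives A, B of classes of Z_n(H),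
  tr (A^-1 B) is n if the classes agree and 0 otherwise: the representatives are linearly
  independent, and Z_n(H) is finite. Averaging M |-> A M A^-1 over Z_n(H) projects the space of
  matrices onto the commutant of Z, and its trace is (sum of tr A tr A^-1) / |Z_n(H)| =
  n^2 / |Z_n(H)|; hence |Z_n(H)| * dim (commutant of Z) = n^2. If Z is irreducible, Schur's
  lemma makes its commutant one-dimensional, so |Z_n(H)| = n^2; conversely, if |Z_n(H)| = n^2 the
  representatives span all matrices, so a Z-invariant subspace is invariant under every matrix.
\<close>

section \<open>Scalar matrices, inverses and conjugation\<close>

lemma mat_mult_nth: "(mat c ** A) $ i $ j = (c::'a::comm_semiring_1) * A $ i $ j"
  by (simp add: matrix_matrix_mult_def mat_def if_distrib if_distribR sum.delta cong: if_cong)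

lemma mult_mat_nth: "(A ** mat c) $ i $ j = A $ i $ j * (c::'a::comm_semiring_1)"
  by (simp add: matrix_matrix_mult_def mat_def if_distrib if_distribR sum.delta' cong: if_cong)

lemma mat_mult_mat: "mat a ** mat b = mat (a * b :: 'a::comm_semiring_1)"
  by (simp add: vec_eq_iff mat_mult_nth) (simp add: mat_def)

lemma mat_mult_commute: "mat c ** A = A ** mat (c::'a::comm_semiring_1)"
  by (simp add: vec_eq_iff mat_mult_nth mult_mat_nth mult.commute)

lemma matrix_mul_mat_left_commute: "A ** (mat c ** B) = mat (c::'a::comm_semiring_1) ** (A ** B)"
  by (metis mat_mult_commute matrix_mul_assoc)

lemma matrix_mul_mat_factors: "(mat c ** A) ** (mat d ** B) = mat (c * d :: 'a::comm_semiring_1) ** (A ** B)"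
proof -
  have "(mat c ** A) ** (mat d ** B) = mat c ** (mat d ** (A ** B))"
    by (metis matrix_mul_assoc matrix_mul_mat_left_commute)
  then show ?thesis by (simp add: matrix_mul_assoc mat_mult_mat)
qed

lemma mat_vector_mult: "mat c *v v = c *s (v::'a::comm_semiring_1^'n)"
  by (simp add: vec_eq_iff matrix_vector_mult_def mat_def if_distrib if_distribR sum.delta cong: if_cong)

lemma det_mat: "det (mat c :: 'a::comm_ring_1^'n::finite^'n) = c ^ CARD('n)"
  by (subst det_diagonal) (auto simp: mat_def)

lemma trace_mat_mult: "trace (mat c ** A) = (c::'a::comm_semiring_1) * trace (A::'a^'n^'n)"
  by (simp add: trace_def mat_mult_nth sum_distrib_left)

lemma trace_sum: "trace (sum f S) = (\<Sum>x\<in>S. trace (f x :: 'a::comm_semiring_1^'n^'n))"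
  by (induction S rule: infinite_finite_induct) (simp_all add: trace_add trace_0 flip: mat_0)

lemma matrix_add_rdistrib: "(B + C) ** A = B ** A + C ** (A::'a::semiring_1^'n^'m)"
  by (simp add: matrix_matrix_mult_def vec_eq_iff sum.distrib distrib_right)

lemma matrix_mul_sum_right: "(A::'a::semiring_1^'n^'m) ** sum f S = (\<Sum>x\<in>S. A ** f x)"
  by (induction S rule: infinite_finite_induct) (auto simp: matrix_add_ldistrib)

lemma matrix_mul_sum_left: "sum f S ** (A::'a::semiring_1^'n^'m) = (\<Sum>x\<in>S. f x ** A)"
  by (induction S rule: infinite_finite_induct) (auto simp: matrix_add_rdistrib)

lemma matrix_inv_right: "invertible A \<Longrightarrow> A ** matrix_inv A = mat 1"
  and matrix_inv_left: "invertible A \<Longrightarrow> matrix_inv A ** A = mat 1"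
  unfolding invertible_def matrix_inv_def by (metis (mono_tags, lifting) someI_ex)+

lemma matrix_inv_unique:
  fixes A :: "'a::semiring_1^'n^'n"
  assumes "A ** B = mat 1" "B ** A = mat 1" shows "matrix_inv A = B"
proof -
  have "invertible A" using assms unfolding invertible_def by blast
  then have "matrix_inv A = (B ** A) ** matrix_inv A" using assms by simp
  also have "\<dots> = B"
    using \<open>invertible A\<close> by (simp add: matrix_inv_right flip: matrix_mul_assoc)
  finally show ?thesis .
qed

lemma matrix_inv_mult:
  fixes A B :: "'a::field^'n^'n"
  assumes "invertible A" "invertible B"
  shows "matrix_inv (A ** B) = matrix_inv B ** matrix_inv A"
proof (rule matrix_inv_unique)
  have "(A ** B) ** (matrix_inv B ** matrix_inv A) = A ** (B ** matrix_inv B) ** matrix_inv A"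
    by (simp add: matrix_mul_assoc)
  then show "(A ** B) ** (matrix_inv B ** matrix_inv A) = mat 1"
    using assms by (simp add: matrix_inv_left matrix_inv_right)
  have "(matrix_inv B ** matrix_inv A) ** (A ** B) = matrix_inv B ** (matrix_inv A ** A) ** B"
    by (simp add: matrix_mul_assoc)
  then show "(matrix_inv B ** matrix_inv A) ** (A ** B) = mat 1"
    using assms by (simp add: matrix_inv_left matrix_inv_right)
qed

lemma matrix_inv_mat_mult:
  fixes A :: "'a::field^'n^'n"
  assumes "invertible A" "c \<noteq> 0"
  shows "matrix_inv (mat c ** A) = mat (inverse c) ** matrix_inv A"
proof (rule matrix_inv_unique)
  have "(mat c ** A) ** (mat (inverse c) ** matrix_inv A) = mat (c * inverse c) ** (A ** matrix_inv A)"
    by (rule matrix_mul_mat_factors)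
  then show "(mat c ** A) ** (mat (inverse c) ** matrix_inv A) = mat 1"
    using assms by (simp add: matrix_inv_right)
  have "(mat (inverse c) ** matrix_inv A) ** (mat c ** A) = mat (inverse c * c) ** (matrix_inv A ** A)"
    by (rule matrix_mul_mat_factors)
  then show "(mat (inverse c) ** matrix_inv A) ** (mat c ** A) = mat 1"
    using assms by (simp add: matrix_inv_left)
qed

definition conjugate :: "'a::field^'n^'n \<Rightarrow> 'a^'n^'n \<Rightarrow> 'a^'n^'n" where
  "conjugate X M = X ** M ** matrix_inv X"

lemma conjugate_mult:
  "invertible X \<Longrightarrow> invertible Y \<Longrightarrow> conjugate (X ** Y) M = conjugate X (conjugate Y M)"
  by (simp add: conjugate_def matrix_inv_mult matrix_mul_assoc)

lemma conjugate_mat_mult: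
  assumes "invertible X" "c \<noteq> 0"
  shows "conjugate (mat c ** X) M = conjugate X M"
proof -
  have "conjugate (mat c ** X) M = (mat c ** (X ** M)) ** (mat (inverse c) ** matrix_inv X)"
    using assms by (simp add: conjugate_def matrix_inv_mat_mult matrix_mul_assoc)
  also have "\<dots> = conjugate X M"
    using assms by (simp only: matrix_mul_mat_factors) (simp add: conjugate_def matrix_mul_assoc)
  finally show ?thesis .
qed

lemma conjugate_commuting:
  assumes "invertible X" "X ** M = M ** X"
  shows "conjugate X M = M"
proof -
  have "conjugate X M = M ** (X ** matrix_inv X)"
    using assms(2) by (simp add: conjugate_def matrix_mul_assoc)
  then show ?thesis using assms(1) by (simp add: matrix_inv_right)
qed

lemma commute_if_conjugate_eq:
  assumes "invertible A" "conjugate A M = M"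
  shows "A ** M = M ** A"
proof -
  have "A ** M = conjugate A M ** A"
    using assms(1) by (simp add: conjugate_def matrix_inv_left flip: matrix_mul_assoc)
  then show ?thesis using assms(2) by simp
qed

lemma conjugate_add: "conjugate X (M + N) = conjugate X M + conjugate X N"
  by (simp add: conjugate_def matrix_add_ldistrib matrix_add_rdistrib)

lemma conjugate_mat_mult_right: "conjugate X (mat c ** M) = mat c ** conjugate X M"
  by (simp add: conjugate_def matrix_mul_mat_left_commute) (simp add: matrix_mul_assoc)

lemma conjugate_sum: "conjugate X (sum f S) = (\<Sum>x\<in>S. conjugate X (f x))"
  by (simp add: conjugate_def matrix_mul_sum_left matrix_mul_sum_right)

section \<open>Schur's lemma\<close>

definition charpoly :: "'a::comm_ring_1^'n^'n \<Rightarrow> 'a poly" where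
  "charpoly M = (\<Sum>p | p permutes (UNIV::'n set). smult (of_int (sign p))
     (\<Prod>i\<in>UNIV. [: M$i$(p i), if i = p i then -1 else 0 :]))"

lemma poly_charpoly: "poly (charpoly M) x = det (M - mat x)"
  unfolding charpoly_def det_def
  by (auto simp add: poly_sum poly_prod mat_def intro!: sum.cong prod.cong arg_cong2[where f="(*)"])

lemma coeff_charpoly_card: "coeff (charpoly (M::'a::idom^'n^'n)) CARD('n) = (-1) ^ CARD('n)"
proof -
  define t where "t p = (\<Prod>i\<in>UNIV. [: M$i$(p i), if i = p i then -1 else 0 :])"
    for p :: "'n \<Rightarrow> 'n"
  have other: "coeff (t p) CARD('n) = 0" if "p \<noteq> id" for p
  proof -
    obtain j where j: "p j \<noteq> j" using \<open>p \<noteq> id\<close> by (auto simp: fun_eq_iff)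
    have "degree (t p) \<le> (\<Sum>i\<in>UNIV. degree [: M$i$(p i), if i = p i then -1 else 0 :])"
      unfolding t_def using degree_prod_sum_le[OF finite_class.finite_UNIV] by (simp only: o_def)
    also have "\<dots> = (\<Sum>i\<in>UNIV - {j}. degree [: M$i$(p i), if i = p i then -1 else 0 :])"
      using j by (intro sum.mono_neutral_right) auto
    also have "\<dots> \<le> (\<Sum>i\<in>UNIV - {j}. 1)"
      by (intro sum_mono) auto
    also have "\<dots> < CARD('n)" by (simp add: card_Diff_singleton)
    finally show ?thesis by (intro coeff_eq_0) auto
  qed
  have "degree (t id) = CARD('n)"
    unfolding t_def by (subst degree_prod_sum_eq) auto
  moreover have "lead_coeff (t id) = (-1) ^ CARD('n)"
    unfolding t_def by (simp only: lead_coeff_prod) simp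
  ultimately have diagonal: "coeff (t id) CARD('n) = (-1) ^ CARD('n)"
    by simp
  have "coeff (charpoly M) CARD('n)
      = (\<Sum>p | p permutes (UNIV::'n set). of_int (sign p) * coeff (t p) CARD('n))"
    unfolding charpoly_def coeff_sum t_def by simp
  also have "\<dots> = (\<Sum>p | p permutes (UNIV::'n set). if p = id then (-1) ^ CARD('n) else 0)"
    by (intro sum.cong refl) (auto simp: other diagonal sign_id)
  also have "\<dots> = (-1) ^ CARD('n)"
    by (simp add: sum.delta' permutes_id)
  finally show ?thesis .
qed

lemma eigenvector_exists: "\<exists>c v. v \<noteq> 0 \<and> (M::complex^'n^'n) *v v = c *s v"
proof -
  have "0 < CARD('n)"
    by (simp add: card_gt_0_iff)
  also have "CARD('n) \<le> degree (charpoly M)"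
    by (rule le_degree) (simp add: coeff_charpoly_card)
  finally have "\<not> constant (poly (charpoly M))"
    by (simp add: constant_degree)
  then obtain c where "poly (charpoly M) c = 0"
    using fundamental_theorem_of_algebra by blast
  then have "det (matrix ((*v) (M - mat c))) = 0"
    by (simp add: poly_charpoly matrix_of_matrix_vector_mul)
  then have "\<not> inj ((*v) (M - mat c))"
    using det_nz_iff_inj_gen[OF matrix_vector_mul_linear_gen] by blast
  then obtain u w where "u \<noteq> w" "(M - mat c) *v u = (M - mat c) *v w"
    by (auto simp: inj_def)
  then have "(M - mat c) *v (u - w) = 0"
    by (simp add: matrix_vector_mult_diff_distrib)
  then have "M *v (u - w) = c *s (u - w)"
    by (simp add: matrix_vector_mult_diff_rdistrib mat_vector_mult)
  with \<open>u \<noteq> w\<close> show ?thesis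
    by (metis right_minus_eq)
qed

lemma schur_lemma:
  fixes H :: "(complex^'n^'n) set"
  assumes "irreducible_mats H" and commute: "\<And>h. h \<in> H \<Longrightarrow> h ** M = M ** h"
  shows "\<exists>c. M = mat c"
proof -
  obtain c v where "v \<noteq> 0" "M *v v = c *s v"
    using eigenvector_exists by blast
  define V where "V = {w. M *v w = c *s w}"
  have "csubspace V"
    unfolding csubspace_def V_def
    by (auto simp: matrix_vector_right_distrib vector_scalar_commute algebra_simps)
  moreover have "A *v w \<in> V" if "A \<in> H" "w \<in> V" for A w
  proof -
    have "M *v (A *v w) = A *v (M *v w)"
      using commute[OF \<open>A \<in> H\<close>] by (simp add: matrix_vector_mul_assoc)
    then show ?thesis
      using \<open>w \<in> V\<close> by (simp add: V_def vector_scalar_commute)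
  qed
  moreover have "V \<noteq> {0}"
    using \<open>v \<noteq> 0\<close> \<open>M *v v = c *s v\<close> by (auto simp: V_def)
  ultimately have "V = UNIV"
    using assms(1) unfolding irreducible_mats_def by blast
  then have "\<forall>w. M *v w = mat c *v w" by (auto simp: V_def mat_vector_mult)
  then show ?thesis by (auto simp: matrix_eq)
qed

definition commutant :: "('a::semiring_1^'n^'n) set \<Rightarrow> ('a^'n^'n) set" where
  "commutant S = {M. \<forall>A\<in>S. A ** M = M ** A}"

lemma commutant_eq_range_mat_if_irreducible:
  "irreducible_mats S \<Longrightarrow> commutant S = range mat"
  unfolding commutant_def using schur_lemma by (fastforce simp: mat_mult_commute)

section \<open>Matrices as vectors\<close>

lemma trace_idempotent_linear:
  fixes f :: "'a::field^'m \<Rightarrow> 'a^'m"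
  assumes lin: "Vector_Spaces.linear (*s) (*s) f" and idem: "\<And>x. f (f x) = f x"
  shows "(\<Sum>i\<in>UNIV. f (axis i 1) $ i) = of_nat (vec.dim (range f))"
proof -
  obtain B where B: "B \<subseteq> range f" "vec.independent B" "range f \<subseteq> vec.span B"
      "card B = vec.dim (range f)"
    using vec.basis_exists by blast
  have "finite B"
    using B(2) vec.independent_bound_general by blast
  have span: "f x \<in> vec.span B" for x
    using B(3) by auto
  define r where "r x b = vec.representation B (f x) b" for x b
  have expand: "f x = (\<Sum>b\<in>B. r x b *s b)" for x
    unfolding r_def using vec.sum_representation_eq[OF B(2) span \<open>finite B\<close> order_refl] by simp
  have diagonal: "(\<Sum>i\<in>UNIV. b $ i * r (axis i 1) b) = 1" if "b \<in> B" for b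
  proof -
    have "(\<Sum>i\<in>UNIV. b $ i * r (axis i 1) b)
        = vec.representation B (\<Sum>i\<in>UNIV. b $ i *s f (axis i 1)) b"
      by (simp add: r_def vec.representation_sum[OF B(2)] vec.representation_scale[OF B(2) span]
          vec.span_scale[OF span])
    also have "(\<Sum>i\<in>UNIV. b $ i *s f (axis i 1)) = f (\<Sum>i\<in>UNIV. b $ i *s axis i 1)"
      by (simp add: vec.linear_sum[OF lin] vec.linear_scale[OF lin])
    also have "\<dots> = f b"
      by (simp add: basis_expansion)
    also have "f b = b"
      using B(1) idem that by auto
    finally show ?thesis
      using vec.representation_basis[OF B(2) that] by simp
  qed
  have "(\<Sum>i\<in>UNIV. f (axis i 1) $ i) = (\<Sum>b\<in>B. \<Sum>i\<in>UNIV. b $ i * r (axis i 1) b)"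
    by (subst expand) (simp add: sum_component sum.swap[of _ UNIV] mult.commute)
  also have "\<dots> = of_nat (card B)"
    by (simp add: diagonal)
  finally show ?thesis
    using B(4) by simp
qed

definition flatten :: "'a^'n^'m \<Rightarrow> 'a^('m \<times> 'n)" where
  "flatten M = (\<chi> p. M $ fst p $ snd p)"

definition unflatten :: "'a^('m \<times> 'n) \<Rightarrow> 'a^'n^'m" where
  "unflatten x = (\<chi> i j. x $ (i, j))"

lemma flatten_nth [simp]: "flatten M $ (i, j) = M $ i $ j"
  by (simp add: flatten_def)

lemma unflatten_nth [simp]: "unflatten x $ i $ j = x $ (i, j)"
  by (simp add: unflatten_def)

lemma unflatten_flatten [simp]: "unflatten (flatten M) = M"
  by (simp add: vec_eq_iff)

lemma flatten_unflatten [simp]: "flatten (unflatten x) = x"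
  by (simp add: vec_eq_iff)

lemma inj_flatten: "inj flatten"
  by (metis injI unflatten_flatten)

lemma flatten_add: "flatten (M + N) = flatten M + flatten N"
  by (simp add: vec_eq_iff)

lemma flatten_sum: "flatten (sum f S) = (\<Sum>x\<in>S. flatten (f x))"
  by (induction S rule: infinite_finite_induct) (simp_all add: flatten_add vec_eq_iff)

lemma flatten_mat_mult: "flatten (mat c ** M) = c *s flatten (M::'a::comm_semiring_1^'n^'m)"
  by (simp add: vec_eq_iff mat_mult_nth)

lemma unflatten_zero [simp]: "unflatten 0 = 0"
  by (simp add: vec_eq_iff)

lemma unflatten_add: "unflatten (x + y) = unflatten x + unflatten y"
  by (simp add: vec_eq_iff)

lemma unflatten_sum: "unflatten (sum f S) = (\<Sum>x\<in>S. unflatten (f x))"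
  by (induction S rule: infinite_finite_induct) (simp_all add: unflatten_add)

lemma unflatten_scaleS: "unflatten (c *s x) = mat c ** (unflatten x :: 'a::comm_semiring_1^'n^'m)"
  by (simp add: vec_eq_iff mat_mult_nth)

lemma dim_flatten_range_mat: "vec.dim (flatten ` range (mat :: 'a::field \<Rightarrow> 'a^'n^'n)) = 1"
proof -
  let ?e = "flatten (mat 1 :: 'a^'n^'n)"
  have "(\<lambda>c. flatten (mat c :: 'a^'n^'n)) = (\<lambda>c. c *s ?e)"
    by (rule ext) (metis flatten_mat_mult matrix_mul_rid)
  then have span: "flatten ` range (mat :: 'a \<Rightarrow> 'a^'n^'n) = vec.span {?e}"
    unfolding vec.span_singleton image_image by (rule arg_cong)
  have "?e $ (i, i) \<noteq> 0" for i
    by (simp add: mat_def)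
  then have "?e \<noteq> 0"
    by (metis zero_index)
  then have "vec.independent {?e}"
    by (simp add: vec.independent_insert vec.span_empty)
  from vec.dim_span_eq_card_independent[OF this] show ?thesis
    by (simp add: span)
qed

lemma trace_flatten_sandwich:
  fixes X Y :: "'a::comm_semiring_1^'n^'n"
  shows "(\<Sum>p\<in>UNIV. flatten (X ** unflatten (axis p 1) ** Y) $ p) = trace X * trace Y"
proof -
  have left: "(X ** unflatten (axis (i, j) 1)) $ k $ l = (if l = j then X $ k $ i else 0)" for i j k l
    by (auto simp: matrix_matrix_mult_def axis_def if_distrib if_distribR cong: if_cong)
  have entry: "(X ** unflatten (axis (i, j) 1) ** Y) $ i $ j = X $ i $ i * Y $ j $ j" for i j
    unfolding matrix_matrix_mult_def[of "X ** unflatten (axis (i, j) 1)"]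
    by (simp add: left if_distrib if_distribR cong: if_cong)
  have "(\<Sum>p\<in>UNIV. flatten (X ** unflatten (axis p 1) ** Y) $ p)
      = (\<Sum>i\<in>UNIV. \<Sum>j\<in>UNIV. (X ** unflatten (axis (i, j) 1) ** Y) $ i $ j)"
    by (subst UNIV_Times_UNIV[symmetric], subst sum.cartesian_product') simp
  then show ?thesis
    by (simp add: entry trace_def sum_product)
qed

lemma trace_mult_unflatten_sum:
  fixes M :: "'a::comm_semiring_1^'n^'n"
  shows "trace (M ** unflatten (\<Sum>v\<in>S. u v *s v)) = (\<Sum>v\<in>S. u v * trace (M ** unflatten v))"
  by (simp add: unflatten_sum unflatten_scaleS matrix_mul_sum_right trace_sum
      matrix_mul_mat_left_commute trace_mat_mult)

lemma csubspace_invariant_span: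
  fixes V :: "(complex^'n) set"
  assumes V: "csubspace V" and invariant: "\<And>A w. A \<in> S \<Longrightarrow> w \<in> V \<Longrightarrow> A *v w \<in> V"
    and M: "flatten M \<in> vec.span (flatten ` S)" and "v \<in> V"
  shows "M *v v \<in> V"
proof -
  have "vec.subspace {x. unflatten x *v v \<in> V}"
    using V by (auto simp: vec.subspace_def csubspace_def unflatten_add unflatten_scaleS
        matrix_vector_mult_add_rdistrib mat_vector_mult simp flip: matrix_vector_mul_assoc)
  moreover have "unflatten x *v v \<in> V" if "x \<in> flatten ` S" for x
    using that invariant \<open>v \<in> V\<close> by auto
  ultimately have "unflatten (flatten M) *v v \<in> V"
    using vec.span_induct[OF M, of "\<lambda>x. unflatten x *v v \<in> V"] by blast
  then show ?thesis by simp
qed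

lemma csubspace_invariant_all_matrices:
  fixes V :: "(complex^'n) set"
  assumes "csubspace V" "V \<noteq> {0}" and invariant: "\<And>M v. v \<in> V \<Longrightarrow> M *v v \<in> V"
  shows "V = UNIV"
proof -
  obtain x where "x \<in> V" "x \<noteq> 0"
    using assms(1,2) unfolding csubspace_def by blast
  then obtain k where "x $ k \<noteq> 0"
    by (metis vec_eq_iff zero_index)
  have "y \<in> V" for y
  proof -
    define M :: "complex^'n^'n" where "M = (\<chi> i j. if j = k then y $ i / x $ k else 0)"
    have "M *v x = y"
      using \<open>x $ k \<noteq> 0\<close>
      by (simp add: vec_eq_iff M_def matrix_vector_mult_def if_distrib if_distribR cong: if_cong)
    then show ?thesis
      using invariant[OF \<open>x \<in> V\<close>, of M] by simp
  qed
  then show ?thesis by blast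
qed

section \<open>The projective special linear group\<close>

lemma nonzero_if_power_card_eq_1: "(c::complex) ^ CARD('n::finite) = 1 \<Longrightarrow> c \<noteq> 0"
  using finite_UNIV_card_ge_0[where 'a='n] by (auto simp: power_0_left)

lemma center_SL_eq: "(center_SL :: (complex^'n::finite^'n) set) = {mat c | c. c ^ CARD('n) = 1}"
proof -
  have "xi TYPE('n) ^ k = cis (2 * pi * real k / real CARD('n))" for k
    unfolding xi_def Complex.DeMoivre by (rule arg_cong[where f = cis]) simp
  then have roots: "(\<lambda>k. xi TYPE('n) ^ k) ` {..<CARD('n)} = {z. z ^ CARD('n) = 1}"
    using Complex.bij_betw_roots_unity[of "CARD('n)"] by (simp add: bij_betw_def)
  have "(center_SL :: (complex^'n^'n) set) = mat ` (\<lambda>k. xi TYPE('n) ^ k) ` {..<CARD('n)}"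
    unfolding center_SL_def by auto
  then show ?thesis
    unfolding roots by auto
qed

lemma piPSL_eq: "piPSL (B :: complex^'n::finite^'n) = {mat c ** B | c. c ^ CARD('n) = 1}"
  unfolding piPSL_def center_SL_eq by auto

lemma piPSL_eq_iff:
  fixes A B :: "complex^'n::finite^'n"
  shows "piPSL A = piPSL B \<longleftrightarrow> (\<exists>c. c ^ CARD('n) = 1 \<and> A = mat c ** B)"
proof
  assume "piPSL A = piPSL B"
  moreover have "A \<in> piPSL A"
    unfolding piPSL_eq by (auto intro!: exI[where x = 1])
  ultimately show "\<exists>c. c ^ CARD('n) = 1 \<and> A = mat c ** B"
    unfolding piPSL_eq by auto
next
  assume "\<exists>c. c ^ CARD('n) = 1 \<and> A = mat c ** B"
  then obtain c where c: "c ^ CARD('n) = 1" "A = mat c ** B" by blast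
  have "c \<noteq> 0"
    using c(1) by (rule nonzero_if_power_card_eq_1)
  have "mat d ** A \<in> piPSL B" if "d ^ CARD('n) = 1" for d
  proof -
    have "mat d ** A = mat (d * c) ** B" "(d * c) ^ CARD('n) = 1"
      using c that by (simp_all add: matrix_mul_assoc mat_mult_mat power_mult_distrib)
    then show ?thesis unfolding piPSL_eq by blast
  qed
  moreover have "mat d ** B \<in> piPSL A" if "d ^ CARD('n) = 1" for d
  proof -
    have "mat d ** B = mat (d / c) ** A" "(d / c) ^ CARD('n) = 1"
      using c that \<open>c \<noteq> 0\<close> by (simp_all add: matrix_mul_assoc mat_mult_mat power_divide)
    then show ?thesis unfolding piPSL_eq by blast
  qed
  ultimately show "piPSL A = piPSL B"
    unfolding piPSL_eq[of A] piPSL_eq[of B] by blast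
qed

lemma invertible_if_SL: "A \<in> SL \<Longrightarrow> invertible A"
  by (simp add: SL_def invertible_det_nz)

lemma mat_in_SL_iff: "(mat c :: complex^'n::finite^'n) \<in> SL \<longleftrightarrow> c ^ CARD('n) = 1"
  by (simp add: SL_def det_mat)

lemma piPSL_eq_piPSL_1_iff:
  fixes A :: "complex^'n::finite^'n"
  assumes "A \<in> SL"
  shows "piPSL A = piPSL (mat 1) \<longleftrightarrow> (\<exists>c. A = mat c)"
  using assms by (auto simp: piPSL_eq_iff mat_in_SL_iff)

lemma conjugate_eq_if_piPSL_eq:
  fixes A B :: "complex^'n::finite^'n"
  assumes "piPSL A = piPSL B" "invertible B"
  shows "conjugate A M = conjugate B M"
proof -
  obtain c where "c ^ CARD('n) = 1" "A = mat c ** B"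
    using assms(1) piPSL_eq_iff by blast
  then show ?thesis
    using assms(2) by (simp add: conjugate_mat_mult nonzero_if_power_card_eq_1)
qed

definition proj_commute :: "complex^'n::finite^'n \<Rightarrow> complex^'n^'n \<Rightarrow> bool" where
  "proj_commute A h \<longleftrightarrow> (\<exists>c. c ^ CARD('n) = 1 \<and> A ** h = mat c ** (h ** A))"

lemma piPSL_commute_iff: "piPSL (A ** h) = piPSL (h ** A) \<longleftrightarrow> proj_commute A h"
  by (simp add: proj_commute_def piPSL_eq_iff)

lemma proj_commute_mult:
  fixes A h :: "complex^'n::finite^'n"
  assumes "proj_commute A h" "proj_commute B h"
  shows "proj_commute (A ** B) h"
proof -
  obtain c d where c: "c ^ CARD('n) = 1" "A ** h = mat c ** (h ** A)"
    and d: "d ^ CARD('n) = 1" "B ** h = mat d ** (h ** B)"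
    using assms unfolding proj_commute_def by blast
  have "A ** B ** h = mat d ** ((A ** h) ** B)"
    using d(2) by (metis matrix_mul_assoc matrix_mul_mat_left_commute)
  also have "\<dots> = mat (d * c) ** (h ** (A ** B))"
    using c(2) by (simp add: matrix_mul_assoc mat_mult_mat)
  finally show ?thesis
    using c(1) d(1) unfolding proj_commute_def by (metis power_mult_distrib mult_1)
qed

lemma proj_commute_mat_mult:
  fixes A h :: "complex^'n::finite^'n"
  assumes "proj_commute A h"
  shows "proj_commute (mat c ** A) h"
proof -
  obtain d where d: "d ^ CARD('n) = 1" "A ** h = mat d ** (h ** A)"
    using assms unfolding proj_commute_def by blast
  have "mat c ** A ** h = mat c ** (mat d ** (h ** A))"
    using d(2) by (simp flip: matrix_mul_assoc)
  also have "\<dots> = mat d ** (h ** (mat c ** A))"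
    by (metis matrix_mul_mat_left_commute)
  finally show ?thesis
    using d(1) unfolding proj_commute_def by blast
qed

lemma proj_commute_matrix_inv:
  fixes A h :: "complex^'n::finite^'n"
  assumes "proj_commute A h" "invertible A"
  shows "proj_commute (matrix_inv A) h"
proof -
  let ?B = "matrix_inv A"
  obtain c where c: "c ^ CARD('n) = 1" "A ** h = mat c ** (h ** A)"
    using assms(1) unfolding proj_commute_def by blast
  have "c \<noteq> 0"
    using c(1) by (rule nonzero_if_power_card_eq_1)
  have "h ** ?B = ?B ** (A ** h) ** ?B"
    using assms(2) by (simp add: matrix_mul_assoc matrix_inv_left matrix_inv_right)
  also have "\<dots> = mat c ** (?B ** h)"
    using assms(2) c(2)
    by (simp add: matrix_mul_mat_left_commute matrix_inv_right flip: matrix_mul_assoc)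
  finally have "mat (inverse c) ** (h ** ?B) = mat (inverse c) ** (mat c ** (?B ** h))"
    by simp
  then have "?B ** h = mat (inverse c) ** (h ** ?B)"
    using \<open>c \<noteq> 0\<close> by (simp add: matrix_mul_assoc mat_mult_mat)
  moreover have "inverse c ^ CARD('n) = 1"
    using c(1) by (simp add: power_inverse)
  ultimately show ?thesis
    unfolding proj_commute_def by blast
qed

lemma trace_eq_0_if_proj_commute:
  fixes A h :: "complex^'n::finite^'n"
  assumes "proj_commute A h" "invertible h" "A ** h \<noteq> h ** A"
  shows "trace A = 0"
proof -
  obtain c where c: "A ** h = mat c ** (h ** A)"
    using assms(1) unfolding proj_commute_def by blast
  with assms(3) have "c \<noteq> 1" by auto
  let ?g = "matrix_inv h"
  have "trace A = trace ((A ** h) ** ?g)"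
    using assms(2) by (simp add: matrix_inv_right flip: matrix_mul_assoc)
  also have "\<dots> = trace (?g ** (A ** h))"
    by (rule trace_mul_sym)
  also have "\<dots> = trace (mat c ** ((?g ** h) ** A))"
    by (simp only: c matrix_mul_mat_left_commute) (simp add: matrix_mul_assoc)
  also have "\<dots> = c * trace A"
    using assms(2) by (simp add: trace_mat_mult matrix_inv_left)
  finally have "(1 - c) * trace A = 0"
    by (simp add: algebra_simps)
  with \<open>c \<noteq> 1\<close> show ?thesis by simp
qed

section \<open>The projective centralizer of an irreducible subgroup\<close>

locale irreducible_SL_subgroup =
  fixes H :: "(complex^'n::finite^'n) set"
  assumes subgroup: "subgroup_SL H" and irreducible: "irreducible_mats H"
begin

definition Zn_preimage :: "(complex^'n^'n) set" where
  "Zn_preimage = {A \<in> SL. piPSL A \<in> Zn H}"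

lemma mem_Zn_preimage_iff: "A \<in> Zn_preimage \<longleftrightarrow> A \<in> SL \<and> (\<forall>h\<in>H. proj_commute A h)"
proof
  assume "A \<in> SL \<and> (\<forall>h\<in>H. proj_commute A h)"
  then show "A \<in> Zn_preimage"
    unfolding Zn_preimage_def Zn_def by (auto simp: piPSL_commute_iff)
next
  assume "A \<in> Zn_preimage"
  then obtain B where "A \<in> SL" "piPSL A = piPSL B" "\<forall>h\<in>H. proj_commute B h"
    unfolding Zn_preimage_def Zn_def by (auto simp: piPSL_commute_iff)
  moreover from \<open>piPSL A = piPSL B\<close> obtain c where "A = mat c ** B"
    by (auto simp: piPSL_eq_iff)
  ultimately show "A \<in> SL \<and> (\<forall>h\<in>H. proj_commute A h)"
    by (simp add: proj_commute_mat_mult)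
qed

lemma Zn_eq_image: "Zn H = piPSL ` Zn_preimage"
  unfolding Zn_def by (auto simp: mem_Zn_preimage_iff piPSL_commute_iff)

lemma invertible_if_Zn_preimage: "A \<in> Zn_preimage \<Longrightarrow> invertible A"
  by (simp add: mem_Zn_preimage_iff invertible_if_SL)

lemma mat_1_Zn_preimage: "mat 1 \<in> Zn_preimage"
  by (auto simp: mem_Zn_preimage_iff mat_in_SL_iff proj_commute_def intro!: exI[of _ 1])

lemma mult_Zn_preimage: "A \<in> Zn_preimage \<Longrightarrow> B \<in> Zn_preimage \<Longrightarrow> A ** B \<in> Zn_preimage"
  by (simp add: mem_Zn_preimage_iff proj_commute_mult SL_def det_mul)

lemma matrix_inv_Zn_preimage: "A \<in> Zn_preimage \<Longrightarrow> matrix_inv A \<in> Zn_preimage"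
proof -
  assume A: "A \<in> Zn_preimage"
  then have "det A * det (matrix_inv A) = 1"
    using det_mul[of A "matrix_inv A"] by (simp add: invertible_if_Zn_preimage matrix_inv_right)
  then have "matrix_inv A \<in> SL"
    using A by (simp add: mem_Zn_preimage_iff SL_def)
  then show ?thesis
    using A by (simp add: mem_Zn_preimage_iff proj_commute_matrix_inv invertible_if_SL)
qed

lemma trace_Zn_preimage_nonscalar:
  assumes "A \<in> Zn_preimage" "\<nexists>c. A = mat c"
  shows "trace A = 0"
proof -
  obtain h where "h \<in> H" "h ** A \<noteq> A ** h"
    using schur_lemma[OF irreducible, of A] assms(2) by blast
  moreover have "invertible h"
    using \<open>h \<in> H\<close> subgroup by (simp add: subgroup_SL_def invertible_if_SL subset_iff)
  ultimately show ?thesis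
    using assms(1) trace_eq_0_if_proj_commute by (metis mem_Zn_preimage_iff)
qed

definition repr :: "(complex^'n^'n) set \<Rightarrow> complex^'n^'n" where
  "repr z = (SOME A. A \<in> Zn_preimage \<and> piPSL A = z)"

lemma repr: "z \<in> Zn H \<Longrightarrow> repr z \<in> Zn_preimage \<and> piPSL (repr z) = z"
  unfolding repr_def by (rule someI_ex) (auto simp: Zn_eq_image)

lemma repr_Zn_preimage: "z \<in> Zn H \<Longrightarrow> repr z \<in> Zn_preimage"
  and piPSL_repr: "z \<in> Zn H \<Longrightarrow> piPSL (repr z) = z"
  using repr by blast+

lemma inj_on_flatten_repr: "inj_on (flatten \<circ> repr) (Zn H)"
proof (rule inj_onI)
  fix z w assume "z \<in> Zn H" "w \<in> Zn H" "(flatten \<circ> repr) z = (flatten \<circ> repr) w"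
  then show "z = w"
    using inj_flatten piPSL_repr by (metis comp_apply injD)
qed

lemma trace_matrix_inv_repr_mult:
  assumes "z \<in> Zn H" "w \<in> Zn H"
  shows "trace (matrix_inv (repr z) ** repr w) = (if z = w then of_nat CARD('n) else 0)"
proof (cases "z = w")
  case True
  then show ?thesis
    using assms(1) by (simp add: matrix_inv_left invertible_if_Zn_preimage repr_Zn_preimage trace_I)
next
  case False
  let ?X = "matrix_inv (repr z) ** repr w"
  have X: "?X \<in> Zn_preimage"
    using assms by (simp add: mult_Zn_preimage matrix_inv_Zn_preimage repr_Zn_preimage)
  have "\<nexists>c. ?X = mat c"
  proof
    assume "\<exists>c. ?X = mat c"
    then obtain c where "?X = mat c" by blast
    moreover from X this have "c ^ CARD('n) = 1"
      by (simp add: mem_Zn_preimage_iff mat_in_SL_iff)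
    moreover have "repr z ** ?X = repr w"
      using assms(1)
      by (simp add: matrix_mul_assoc matrix_inv_right invertible_if_Zn_preimage repr_Zn_preimage)
    ultimately have "piPSL (repr w) = piPSL (repr z)"
      by (metis mat_mult_commute piPSL_eq_iff)
    with False assms show False
      by (simp add: piPSL_repr)
  qed
  with False X show ?thesis
    by (simp add: trace_Zn_preimage_nonscalar)
qed

lemma independent_flatten_repr: "vec.independent (flatten ` repr ` Zn H)"
  unfolding vec.independent_explicit_finite_subsets
proof (intro allI impI ballI)
  fix S u v
  assume S: "S \<subseteq> flatten ` repr ` Zn H" "finite S" and sum: "(\<Sum>v\<in>S. u v *s v) = 0"
    and "v \<in> S"
  then obtain w where w: "w \<in> Zn H" "v = flatten (repr w)" by auto
  \<comment> \<open>pairing with \<open>trace (matrix_inv (repr w) ** _)\<close> isolates the coefficient of \<open>v\<close>\<close>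
  have "0 = trace (matrix_inv (repr w) ** unflatten (\<Sum>v\<in>S. u v *s v))"
    by (simp add: sum trace_def matrix_matrix_mult_def)
  also have "\<dots> = (\<Sum>v'\<in>S. u v' * trace (matrix_inv (repr w) ** unflatten v'))"
    by (rule trace_mult_unflatten_sum)
  also have "\<dots> = (\<Sum>v'\<in>S. if v' = v then u v * of_nat CARD('n) else 0)"
  proof (rule sum.cong[OF refl])
    fix v' assume "v' \<in> S"
    then obtain z where z: "z \<in> Zn H" "v' = flatten (repr z)" using S(1) by auto
    then have "v' = v \<longleftrightarrow> w = z"
      using w inj_on_eq_iff[OF inj_on_flatten_repr z(1) w(1)] by auto
    then show "u v' * trace (matrix_inv (repr w) ** unflatten v')
        = (if v' = v then u v * of_nat CARD('n) else 0)"
      using trace_matrix_inv_repr_mult[OF w(1) z(1)] z w by auto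
  qed
  also have "\<dots> = u v * of_nat CARD('n)"
    using S(2) \<open>v \<in> S\<close> by simp
  finally show "u v = 0" by simp
qed

lemma finite_Zn: "finite (Zn H)"
proof -
  have "finite ((flatten \<circ> repr) ` Zn H)"
    using vec.independent_bound_general[OF independent_flatten_repr] by (simp add: image_comp)
  then show ?thesis
    using finite_imageD inj_on_flatten_repr by blast
qed

lemma trace_repr_mult_trace_inv:
  assumes "z \<in> Zn H"
  shows "trace (repr z) * trace (matrix_inv (repr z))
    = (if z = piPSL (mat 1) then of_nat (CARD('n) * CARD('n)) else 0)"
proof (cases "\<exists>c. repr z = mat c")
  case True
  then obtain c where c: "repr z = mat c" by blast
  then have "c ^ CARD('n) = 1"
    using repr_Zn_preimage[OF assms] by (simp add: mem_Zn_preimage_iff mat_in_SL_iff)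
  then have "c \<noteq> 0"
    by (rule nonzero_if_power_card_eq_1)
  then have "matrix_inv (repr z) = mat (inverse c)"
    unfolding c by (intro matrix_inv_unique) (simp_all add: mat_mult_mat)
  moreover have "z = piPSL (mat 1)"
    using True assms repr_Zn_preimage piPSL_repr
    by (metis mem_Zn_preimage_iff piPSL_eq_piPSL_1_iff)
  ultimately show ?thesis
    using c \<open>c \<noteq> 0\<close> by (simp add: trace_def mat_def)
next
  case False
  then have "z \<noteq> piPSL (mat 1)"
    using assms repr_Zn_preimage piPSL_repr by (metis mem_Zn_preimage_iff piPSL_eq_piPSL_1_iff)
  with False show ?thesis
    using assms by (simp add: trace_Zn_preimage_nonscalar repr_Zn_preimage)
qed

lemma sum_trace_repr_mult_trace_inv:
  "(\<Sum>z\<in>Zn H. trace (repr z) * trace (matrix_inv (repr z))) = of_nat (CARD('n) * CARD('n))"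
proof -
  have "piPSL (mat 1) \<in> Zn H"
    using mat_1_Zn_preimage by (simp add: Zn_eq_image)
  then show ?thesis
    using finite_Zn by (simp add: trace_repr_mult_trace_inv)
qed

lemma card_Zn_gt_0: "0 < card (Zn H)"
  using finite_Zn mat_1_Zn_preimage by (auto simp: Zn_eq_image card_gt_0_iff)

lemma bij_betw_Zn_translation:
  assumes A: "A \<in> Zn_preimage"
  shows "bij_betw (\<lambda>z. piPSL (A ** repr z)) (Zn H) (Zn H)"
proof -
  let ?t = "\<lambda>z. piPSL (A ** repr z)"
  have into: "?t ` Zn H \<subseteq> Zn H"
    using A by (auto simp: Zn_eq_image mult_Zn_preimage repr_Zn_preimage)
  have "inj_on ?t (Zn H)"
  proof (rule inj_onI)
    fix z w assume z: "z \<in> Zn H" and w: "w \<in> Zn H" and "?t z = ?t w"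
    then obtain c where c: "c ^ CARD('n) = 1" "A ** repr z = mat c ** (A ** repr w)"
      by (auto simp: piPSL_eq_iff)
    have "repr z = matrix_inv A ** (A ** repr z)"
      using A by (simp add: matrix_mul_assoc matrix_inv_left invertible_if_Zn_preimage)
    also have "\<dots> = mat c ** ((matrix_inv A ** A) ** repr w)"
      unfolding c(2) by (metis matrix_mul_assoc matrix_mul_mat_left_commute)
    also have "\<dots> = mat c ** repr w"
      using A by (simp add: matrix_inv_left invertible_if_Zn_preimage)
    finally show "z = w"
      using c(1) z w piPSL_repr piPSL_eq_iff by metis
  qed
  then show ?thesis
    using into finite_Zn by (simp add: bij_betw_def endo_inj_surj)
qed

text \<open>
  Since conjugation by A only depends on piPSL A, this is the average of M over the finite group
  Z_n(H) acting by conjugation, whatever representatives are chosen.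
\<close>

definition average :: "complex^'n^'n \<Rightarrow> complex^'n^'n" where
  "average M = mat (1 / of_nat (card (Zn H))) ** (\<Sum>z\<in>Zn H. conjugate (repr z) M)"

lemma average_commutant: "average M \<in> commutant Zn_preimage"
  unfolding commutant_def
proof (intro CollectI ballI)
  fix A assume A: "A \<in> Zn_preimage"
  let ?t = "\<lambda>z. piPSL (A ** repr z)"
  have "conjugate A (\<Sum>z\<in>Zn H. conjugate (repr z) M) = (\<Sum>z\<in>Zn H. conjugate (A ** repr z) M)"
    using A by (simp add: conjugate_sum conjugate_mult invertible_if_Zn_preimage repr_Zn_preimage)
  also have "\<dots> = (\<Sum>z\<in>Zn H. conjugate (repr (?t z)) M)"
  proof (rule sum.cong[OF refl])
    fix z assume "z \<in> Zn H"
    then have "?t z \<in> Zn H"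
      using bij_betw_apply[OF bij_betw_Zn_translation[OF A]] by blast
    then show "conjugate (A ** repr z) M = conjugate (repr (?t z)) M"
      by (simp add: conjugate_eq_if_piPSL_eq piPSL_repr invertible_if_Zn_preimage repr_Zn_preimage)
  qed
  also have "\<dots> = (\<Sum>z\<in>Zn H. conjugate (repr z) M)"
    by (rule sum.reindex_bij_betw[OF bij_betw_Zn_translation[OF A]])
  finally have "conjugate A (average M) = average M"
    by (simp add: average_def conjugate_mat_mult_right)
  then show "A ** average M = average M ** A"
    by (rule commute_if_conjugate_eq[OF invertible_if_Zn_preimage[OF A]])
qed

lemma average_eq_if_commutant:
  assumes "M \<in> commutant Zn_preimage"
  shows "average M = M"
proof -
  have "conjugate (repr z) M = M" if "z \<in> Zn H" for z
    using assms that
    by (simp add: commutant_def conjugate_commuting invertible_if_Zn_preimage repr_Zn_preimage)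
  moreover have "card (Zn H) \<noteq> 0"
    using card_Zn_gt_0 by simp
  ultimately show ?thesis
    by (simp add: average_def vec_eq_iff mat_mult_nth sum_component)
qed

lemma average_add: "average (M + N) = average M + average N"
  by (simp add: average_def conjugate_add sum.distrib matrix_add_ldistrib)

lemma average_mat_mult: "average (mat c ** M) = mat c ** average M"
proof -
  have "(\<Sum>z\<in>Zn H. conjugate (repr z) (mat c ** M))
      = mat c ** (\<Sum>z\<in>Zn H. conjugate (repr z) M)"
    by (simp add: conjugate_mat_mult_right matrix_mul_sum_right)
  then show ?thesis
    by (simp add: average_def matrix_mul_assoc mat_mult_mat mult.commute)
qed

lemma linear_flatten_average: "Vector_Spaces.linear (*s) (*s) (\<lambda>x. flatten (average (unflatten x)))"
  unfolding Vector_Spaces.linear_iff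
  by (simp add: vec.vector_space_axioms unflatten_add average_add flatten_add unflatten_scaleS
      average_mat_mult flatten_mat_mult)

lemma range_flatten_average:
  "range (\<lambda>x. flatten (average (unflatten x))) = flatten ` commutant Zn_preimage"
proof
  show "range (\<lambda>x. flatten (average (unflatten x))) \<subseteq> flatten ` commutant Zn_preimage"
    using average_commutant by auto
  show "flatten ` commutant Zn_preimage \<subseteq> range (\<lambda>x. flatten (average (unflatten x)))"
  proof
    fix y assume "y \<in> flatten ` commutant Zn_preimage"
    then have "y = flatten (average (unflatten y))"
      by (auto simp: average_eq_if_commutant)
    then show "y \<in> range (\<lambda>x. flatten (average (unflatten x)))"
      by (metis rangeI)
  qed
qed

lemma trace_flatten_average:
  "(\<Sum>p\<in>UNIV. flatten (average (unflatten (axis p 1))) $ p)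
    = of_nat (CARD('n) * CARD('n)) / of_nat (card (Zn H))"
proof -
  have "(\<Sum>p\<in>UNIV. flatten (average (unflatten (axis p 1))) $ p)
      = 1 / of_nat (card (Zn H)) *
        (\<Sum>z\<in>Zn H. \<Sum>p\<in>UNIV. flatten (repr z ** unflatten (axis p 1) ** matrix_inv (repr z)) $ p)"
    by (simp add: average_def flatten_mat_mult flatten_sum sum_component conjugate_def
        sum_distrib_left sum.swap[of _ UNIV])
  also have "\<dots>
      = 1 / of_nat (card (Zn H)) * (\<Sum>z\<in>Zn H. trace (repr z) * trace (matrix_inv (repr z)))"
    by (simp add: trace_flatten_sandwich)
  also have "\<dots> = of_nat (CARD('n) * CARD('n)) / of_nat (card (Zn H))"
    by (simp add: sum_trace_repr_mult_trace_inv)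
  finally show ?thesis .
qed

lemma card_Zn_mult_dim_commutant:
  "card (Zn H) * vec.dim (flatten ` commutant Zn_preimage) = CARD('n) * CARD('n)"
proof -
  have "flatten (average (unflatten (flatten (average (unflatten x)))))
      = flatten (average (unflatten x))" for x
    by (simp add: average_eq_if_commutant average_commutant)
  from trace_idempotent_linear[OF linear_flatten_average this]
  have "(of_nat (vec.dim (flatten ` commutant Zn_preimage)) :: complex)
      = of_nat (CARD('n) * CARD('n)) / of_nat (card (Zn H))"
    by (simp add: trace_flatten_average range_flatten_average)
  then have "(of_nat (card (Zn H) * vec.dim (flatten ` commutant Zn_preimage)) :: complex)
      = of_nat (CARD('n) * CARD('n))"
    using card_Zn_gt_0 by (simp add: field_simps)
  then show ?thesis
    using of_nat_eq_iff by blast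
qed

lemma card_Zn_if_irreducible:
  assumes "irreducible_mats Zn_preimage"
  shows "card (Zn H) = CARD('n) * CARD('n)"
  using card_Zn_mult_dim_commutant
  by (simp add: commutant_eq_range_mat_if_irreducible[OF assms] dim_flatten_range_mat)

lemma irreducible_if_card_Zn:
  assumes "card (Zn H) = CARD('n) * CARD('n)"
  shows "irreducible_mats Zn_preimage"
proof -
  have "card (flatten ` repr ` Zn H) = vec.dim (UNIV :: (complex^('n \<times> 'n)) set)"
    using card_image[OF inj_on_flatten_repr] assms by (simp add: image_comp card_cart_basis)
  then have span: "UNIV \<subseteq> vec.span (flatten ` repr ` Zn H)"
    using vec.card_eq_dim[of "flatten ` repr ` Zn H" UNIV] independent_flatten_repr finite_Zn by simp
  have "V = UNIV"
    if V: "csubspace V" "V \<noteq> {0}" "\<forall>A\<in>Zn_preimage. \<forall>v\<in>V. A *v v \<in> V" for V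
  proof (rule csubspace_invariant_all_matrices[OF V(1,2)])
    fix M v assume "v \<in> V"
    have "\<And>A w. A \<in> repr ` Zn H \<Longrightarrow> w \<in> V \<Longrightarrow> A *v w \<in> V"
      using V(3) repr_Zn_preimage by blast
    from csubspace_invariant_span[OF V(1) this] span \<open>v \<in> V\<close>
    show "M *v v \<in> V"
      by (simp add: image_comp subset_iff)
  qed
  then show ?thesis
    unfolding irreducible_mats_def by blast
qed

end

theorem mainTheorem4:
  fixes H :: "(complex^'n::finite^'n) set"
  assumes "subgroup_SL H" and "irreducible_mats H"
  shows "card (Zn H) dvd CARD('n)^2
     \<and> (irreducible_PSL (Zn H) \<longleftrightarrow> card (Zn H) = CARD('n)^2)"
proof -
  interpret irreducible_SL_subgroup H
    using assms by unfold_locales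
  have "irreducible_PSL (Zn H) \<longleftrightarrow> irreducible_mats Zn_preimage"
    by (simp add: irreducible_PSL_def Zn_preimage_def)
  then show ?thesis
    using card_Zn_mult_dim_commutant card_Zn_if_irreducible irreducible_if_card_Zn
    by (metis dvd_triv_left power2_eq_square)
qed

end
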